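(* Let $S$ be an infinite set and $\mathcal{F}\subseteq 2^S$ countable, nontrivial, and closed under finite unions and finite intersections. Let $(C,\mathbf{A})$ be a conditional classification problem with $C$ and $S\setminus C$ infinite and $\mathbf{A}=(A_1,\dots,A_k)$ such that $A_i\notin\mathit{cclass}_1(C,\mathcal{F})$ for $1\le i\le k$. Then there exists $\mathbf{B}\le\mathbf{A}$ with $|\mathbf{B}|=k$ and $\mathbf{B}\in\mathit{ccore}_k(C,\mathcal{F})$.
   Context: $\mathcal{F}$ is nontrivial if $\emptyset,S\in\mathcal{F}$ and for all $Q\in\mathcal{F}$ and finite $E\subseteq S$ both $Q\cup E\in\mathcal{F}$ and $Q\setminus E\in\mathcal{F}$. A classification problem is a vector $(A_1,\dots,A_k)$, $k\ge1$, of pairwise disjoint infinite subsets of $S$, of length $k$. A conditional classification problem is a pair $(C,\mathbf{A})$ with $C\subseteq S$, $\mathbf{A}$ a classification problem and $C$ disjoint from all components of $\mathbf{A}$. For vectors $\mathbf{B}=(B_1,\dots,B_m)$, $\mathbf{Q}=(Q_1,\dots,Q_k)$, $\mathbf{B}\le\mathbf{Q}$ means $1\le m\le k$ and there is an injective $\sigma:\{1,\dots,m\}\to\{1,\dots,k\}$ with $B_i\subseteq Q_{\sigma(i)}$. An $\mathcal{F}$-partition is a vector of pairwise disjoint members of $\mathcal{F}$ whose union is $S$. $\mathit{cclass}_k(C,\mathcal{F})$ is the set of classification problems $\mathbf{A}$ of length $k$ such that $(C,\mathbf{A})$ is a conditional classification problem and there is an $\mathcal{F}$-partition $(Q_0,Q_1,\dots,Q_k)$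 with $C\subseteq Q_0$ and $\mathbf{A}\le(Q_1,\dots,Q_k)$ (a single set $A$ is identified with $(A)$). $\mathit{ccore}_k(C,\mathcal{F})$ is the set of classification problems $\mathbf{A}$ of length $k$ with $(C,\mathbf{A})$ a conditional classification problem such that every classification problem $\mathbf{A}'\le\mathbf{A}$ (any length $\ge1$) satisfies $\mathbf{A}'\notin\mathit{cclass}_{|\mathbf{A}'|}(C,\mathcal{F})$. *)

theory Defs
  imports Main "HOL-Library.Countable_Set"
begin

text \<open>Vectors of sets are represented as lists; index i (0-based) stands for component i+1.\<close>

definition nontrivial_fam :: "'a set \<Rightarrow> 'a set set \<Rightarrow> bool" where
  "nontrivial_fam S F \<longleftrightarrow> {} \<in> F \<and> S \<in> F \<and>
     (\<forall>Q\<in>F. \<forall>E. finite E \<and> E \<subseteq> S \<longrightarrow> Q \<union> E \<in> F \<and> Q - E \<in> F)"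

definition pairwise_disj_vec :: "'a set list \<Rightarrow> bool" where
  "pairwise_disj_vec A \<longleftrightarrow> (\<forall>i<length A. \<forall>j<length A. i \<noteq> j \<longrightarrow> A!i \<inter> A!j = {})"

definition class_problem :: "'a set \<Rightarrow> 'a set list \<Rightarrow> bool" where
  "class_problem S A \<longleftrightarrow> length A \<ge> 1 \<and> pairwise_disj_vec A \<and>
     (\<forall>i<length A. A!i \<subseteq> S \<and> infinite (A!i))"

definition cond_class_problem :: "'a set \<Rightarrow> 'a set \<Rightarrow> 'a set list \<Rightarrow> bool" where
  "cond_class_problem S C A \<longleftrightarrow> C \<subseteq> S \<and> class_problem S A \<and>
     (\<forall>i<length A. C \<inter> A!i = {})"

definition vec_le :: "'a set list \<Rightarrow> 'a set list \<Rightarrow> bool" where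
  "vec_le B Q \<longleftrightarrow> 1 \<le> length B \<and> length B \<le> length Q \<and>
     (\<exists>\<sigma>. inj_on \<sigma> {..<length B} \<and> \<sigma> ` {..<length B} \<subseteq> {..<length Q} \<and>
          (\<forall>i<length B. B!i \<subseteq> Q!(\<sigma> i)))"

definition F_partition :: "'a set \<Rightarrow> 'a set set \<Rightarrow> 'a set list \<Rightarrow> bool" where
  "F_partition S F Q \<longleftrightarrow> pairwise_disj_vec Q \<and> set Q \<subseteq> F \<and> \<Union>(set Q) = S"

text \<open>A partition (Q0,Q1,...,Qk) is the list Q with Q!0 = Q0 and tl Q = (Q1,...,Qk).\<close>
definition cclass :: "'a set \<Rightarrow> nat \<Rightarrow> 'a set \<Rightarrow> 'a set set \<Rightarrow> 'a set list set" where
  "cclass S k C F = {A. length A = k \<and> cond_class_problem S C A \<and>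
     (\<exists>Q. length Q = k + 1 \<and> F_partition S F Q \<and> C \<subseteq> Q!0 \<and> vec_le A (tl Q))}"

definition ccore :: "'a set \<Rightarrow> nat \<Rightarrow> 'a set \<Rightarrow> 'a set set \<Rightarrow> 'a set list set" where
  "ccore S k C F = {A. length A = k \<and> cond_class_problem S C A \<and>
     (\<forall>A'. class_problem S A' \<and> vec_le A' A \<longrightarrow> A' \<notin> cclass S (length A') C F)}"

end

theory Submission
  imports Defs
begin

text \<open>
  Call a member Q of F complemented if S - Q is in F as well. The complemented members containing C
  are exactly the possible first blocks Q0 of F-partitions (Q0, Q1, ..., Qk) with C in Q0, and
  they are closed under intersection and under removal of finitely many points outside C.
  If some Ai met such a Q in a finite set only, removing that set from Q would classify Ai;
  hence every Ai meets every such Q infinitely. Since there are only countably many of them,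
  Ai has an infinite subset Bi almost contained in all of them (a pseudo-intersection).
  Any B' below (B1, ..., Bk) then cannot be classified: its first component would lie in some Qj
  with j \<ge> 1, hence be disjoint from Q0, yet be almost contained in Q0, so it would be finite.
\<close>

primrec pick_chain :: "(nat \<Rightarrow> 'a set) \<Rightarrow> nat \<Rightarrow> 'a set" where
  "pick_chain R 0 = {}"
| "pick_chain R (Suc n) = insert (SOME y. y \<in> R n - pick_chain R n) (pick_chain R n)"

lemma pseudo_intersection_antimono:
  fixes R :: "nat \<Rightarrow> 'a set"
  assumes "antimono R" and "\<And>n. infinite (R n)"
  shows "\<exists>B \<subseteq> R 0. infinite B \<and> (\<forall>n. finite (B - R n))"
proof -
  let ?T = "pick_chain R"
  let ?p = "\<lambda>n. SOME y. y \<in> R n - ?T n"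
  have fin: "finite (?T n)" for n
    by (induct n) auto
  have pick: "?p n \<in> R n - ?T n" for n
  proof (rule someI_ex)
    have "infinite (R n - ?T n)"
      using Diff_infinite_finite[OF fin assms(2)] .
    then show "\<exists>y. y \<in> R n - ?T n"
      by (metis ex_in_conv finite.emptyI)
  qed
  have card: "card (?T n) = n" for n
    by (induct n) (use pick fin in auto)
  have "R n \<subseteq> R 0" for n
    using antimonoD[OF assms(1)] by simp
  then have below: "?T n \<subseteq> R 0" for n
    by (induct n) (use pick in auto)
  have mono: "?T m \<subseteq> ?T n" if "m \<le> n" for m n
    using lift_Suc_mono_le[of ?T, OF _ that] by auto
  have tail: "?T m \<subseteq> ?T n \<union> R n" for m n
  proof (induct m)
    case (Suc m)
    show ?case
    proof (cases "m < n")
      case True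
      then show ?thesis using mono[of "Suc m" n] by auto
    next
      case False
      then have "?p m \<in> R n"
        using pick[of m] antimonoD[OF assms(1), of n m] by auto
      then show ?thesis using Suc by simp
    qed
  qed simp
  define B where "B = (\<Union>n. ?T n)"
  have "infinite B"
  proof
    assume "finite B"
    moreover have "?T (Suc (card B)) \<subseteq> B"
      unfolding B_def by blast
    ultimately have "card (?T (Suc (card B))) \<le> card B"
      by (rule card_mono)
    then show False
      using card[of "Suc (card B)"] by linarith
  qed
  moreover have "finite (B - R n)" for n
  proof (rule finite_subset[OF _ fin[of n]])
    show "B - R n \<subseteq> ?T n"
      unfolding B_def using tail[of _ n] by blast
  qed
  moreover have "B \<subseteq> R 0"
    unfolding B_def using below by blast
  ultimately show ?thesis
    by blast
qed

lemma Inter_closed_finite: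
  assumes "\<forall>P\<in>K. \<forall>Q\<in>K. P \<inter> Q \<in> K" and "finite M" "M \<noteq> {}" "M \<subseteq> K"
  shows "\<Inter>M \<in> K"
  using assms(2-4) by (induct rule: finite_ne_induct) (use assms(1) in auto)

lemma pseudo_intersection_countable:
  assumes "countable K" "K \<noteq> {}" and "\<forall>P\<in>K. \<forall>Q\<in>K. P \<inter> Q \<in> K"
    and "\<forall>Q\<in>K. infinite (X \<inter> Q)"
  shows "\<exists>B \<subseteq> X. infinite B \<and> (\<forall>Q\<in>K. finite (B - Q))"
proof -
  define f where "f = from_nat_into K"
  define R where "R n = X \<inter> \<Inter>(f ` {..n})" for n
  have "f ` {..n} \<subseteq> K" for n
    using from_nat_into[OF assms(2)] by (auto simp: f_def)
  then have "\<Inter>(f ` {..n}) \<in> K" for n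
    by (intro Inter_closed_finite[OF assms(3)]) auto
  then have "infinite (R n)" for n
    using assms(4) by (simp add: R_def)
  moreover have "antimono R"
    by (rule antimonoI) (auto simp: R_def)
  ultimately obtain B where B: "B \<subseteq> R 0" "infinite B" "\<forall>n. finite (B - R n)"
    using pseudo_intersection_antimono[of R] by blast
  have "finite (B - Q)" if Q: "Q \<in> K" for Q
  proof -
    obtain n where "f n = Q"
      using from_nat_into_surj[OF assms(1) Q] by (auto simp: f_def)
    then have "B - Q \<subseteq> B - R n"
      by (force simp: R_def)
    then show ?thesis
      using B(3) finite_subset by blast
  qed
  moreover have "B \<subseteq> X"
    using B(1) by (simp add: R_def)
  ultimately show ?thesis
    using B(2) by blast
qed

definition complemented_supersets :: "'a set \<Rightarrow> 'a set set \<Rightarrow> 'a set \<Rightarrow> 'a set set" where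
  "complemented_supersets S F C = {Q \<in> F. S - Q \<in> F \<and> C \<subseteq> Q}"

lemma complemented_supersets_Int:
  assumes "\<forall>Q1\<in>F. \<forall>Q2\<in>F. Q1 \<union> Q2 \<in> F \<and> Q1 \<inter> Q2 \<in> F"
    and "P \<in> complemented_supersets S F C" "Q \<in> complemented_supersets S F C"
  shows "P \<inter> Q \<in> complemented_supersets S F C"
  using assms by (auto simp: complemented_supersets_def Diff_Int)

lemma complemented_supersets_Diff_finite:
  assumes "nontrivial_fam S F" and "Q \<in> complemented_supersets S F C"
    and "finite E" "E \<subseteq> S" "C \<inter> E = {}"
  shows "Q - E \<in> complemented_supersets S F C"
proof -
  have "S - (Q - E) = (S - Q) \<union> E"
    using assms(4) by auto
  then show ?thesis
    using assms by (auto simp: complemented_supersets_def nontrivial_fam_def)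
qed

lemma Union_list_closed:
  assumes "\<forall>Q1\<in>F. \<forall>Q2\<in>F. Q1 \<union> Q2 \<in> F" "{} \<in> F" "set xs \<subseteq> F"
  shows "\<Union>(set xs) \<in> F"
  using assms(3) by (induct xs) (use assms(1,2) in auto)

lemma pairwise_disj_vec_Cons:
  assumes "pairwise_disj_vec (Q0 # Qs)" "X \<in> set Qs"
  shows "Q0 \<inter> X = {}"
proof -
  obtain j where "j < length Qs" "X = Qs ! j"
    using assms(2) by (auto simp: in_set_conv_nth)
  then show ?thesis
    using assms(1) unfolding pairwise_disj_vec_def
    by (metis length_Cons nat.distinct(1) nth_Cons_0 nth_Cons_Suc Suc_less_eq zero_less_Suc)
qed

lemma F_partition_first_block:
  assumes "nontrivial_fam S F" and "\<forall>Q1\<in>F. \<forall>Q2\<in>F. Q1 \<union> Q2 \<in> F"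
    and "F_partition S F (Q0 # Qs)" "C \<subseteq> Q0"
  shows "Q0 \<in> complemented_supersets S F C"
proof -
  have "S - Q0 = \<Union>(set Qs)"
    using assms(3) pairwise_disj_vec_Cons unfolding F_partition_def by fastforce
  moreover have "\<Union>(set Qs) \<in> F"
    using assms unfolding F_partition_def nontrivial_fam_def
    by (intro Union_list_closed) auto
  ultimately show ?thesis
    using assms(3,4) by (simp add: complemented_supersets_def F_partition_def)
qed

lemma singleton_in_cclass1:
  assumes "F \<subseteq> Pow S" and "cond_class_problem S C [A]"
    and "Q \<in> complemented_supersets S F C" "A \<inter> Q = {}"
  shows "[A] \<in> cclass S 1 C F"
proof -
  have "Q \<subseteq> S" "A \<subseteq> S"
    using assms unfolding complemented_supersets_def cond_class_problem_def class_problem_def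
    by auto
  then have "F_partition S F [Q, S - Q]"
    using assms(3) unfolding F_partition_def pairwise_disj_vec_def complemented_supersets_def
    by (auto simp: less_Suc_eq)
  moreover have "vec_le [A] [S - Q]"
    using \<open>A \<subseteq> S\<close> assms(4) unfolding vec_le_def by (intro conjI exI[of _ id]) auto
  ultimately show ?thesis
    using assms(2,3) unfolding cclass_def complemented_supersets_def
    by (intro CollectI conjI exI[of _ "[Q, S - Q]"]) auto
qed

lemma infinite_Int_if_not_cclass1:
  assumes "F \<subseteq> Pow S" "nontrivial_fam S F" and "cond_class_problem S C [A]"
    and "[A] \<notin> cclass S 1 C F" and "Q \<in> complemented_supersets S F C"
  shows "infinite (A \<inter> Q)"
proof
  assume "finite (A \<inter> Q)"
  moreover have "A \<subseteq> S" "C \<inter> A = {}"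
    using assms(3) unfolding cond_class_problem_def class_problem_def by auto
  ultimately have "Q - A \<inter> Q \<in> complemented_supersets S F C"
    using assms(2,5) by (intro complemented_supersets_Diff_finite) auto
  then have "[A] \<in> cclass S 1 C F"
    by (rule singleton_in_cclass1[OF assms(1,3)]) auto
  with assms(4) show False ..
qed

lemma vec_le_first:
  assumes "vec_le B Q"
  shows "\<exists>j<length Q. B ! 0 \<subseteq> Q ! j"
  using assms unfolding vec_le_def by (metis image_subset_iff lessThan_iff less_le_trans zero_less_one)

lemma vec_le_componentwise:
  assumes "length B = length A" "length A \<ge> 1" "\<forall>i<length A. B ! i \<subseteq> A ! i"
  shows "vec_le B A"
  using assms unfolding vec_le_def by (intro conjI exI[of _ id]) auto

lemma cond_class_problem_shrink:
  assumes "cond_class_problem S C A" "length B = length A"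
    and "\<forall>i<length A. B ! i \<subseteq> A ! i \<and> infinite (B ! i)"
  shows "cond_class_problem S C B"
proof -
  have A: "C \<subseteq> S" "1 \<le> length A" "pairwise_disj_vec A"
    "\<forall>i<length A. A ! i \<subseteq> S \<and> C \<inter> A ! i = {}"
    using assms(1) by (auto simp: cond_class_problem_def class_problem_def)
  have "B ! i \<inter> B ! j = {}" if "i < length B" "j < length B" "i \<noteq> j" for i j
  proof -
    have "B ! i \<inter> B ! j \<subseteq> A ! i \<inter> A ! j"
      using assms(2,3) that by (intro Int_mono) auto
    also have "\<dots> = {}"
      using A(3) assms(2) that by (simp add: pairwise_disj_vec_def)
    finally show ?thesis by simp
  qed
  moreover have "B ! i \<subseteq> S \<and> infinite (B ! i) \<and> C \<inter> B ! i = {}" if "i < length B" for i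
    using A(4)[rule_format, of i] assms(3)[rule_format, of i] assms(2) that by auto
  ultimately show ?thesis
    using A(1,2) assms(2) by (simp add: cond_class_problem_def class_problem_def pairwise_disj_vec_def)
qed

lemma ccore_if_pseudo_intersections:
  assumes "nontrivial_fam S F" "\<forall>Q1\<in>F. \<forall>Q2\<in>F. Q1 \<union> Q2 \<in> F"
    and "cond_class_problem S C B"
    and "\<forall>i<length B. \<forall>Q\<in>complemented_supersets S F C. finite (B ! i - Q)"
  shows "B \<in> ccore S (length B) C F"
  unfolding ccore_def
proof (intro CollectI conjI allI impI notI)
  fix B' assume B': "class_problem S B' \<and> vec_le B' B" and "B' \<in> cclass S (length B') C F"
  then obtain Q0 Qs where part: "F_partition S F (Q0 # Qs)" and "C \<subseteq> Q0"
    and "vec_le B' Qs"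
    unfolding cclass_def by (auto simp: length_Suc_conv)
  then have "Q0 \<in> complemented_supersets S F C"
    using assms(1,2) by (intro F_partition_first_block)
  obtain i where "i < length B" "B' ! 0 \<subseteq> B ! i"
    using vec_le_first B' by blast
  with assms(4) \<open>Q0 \<in> _\<close> have "finite (B' ! 0 - Q0)"
    by (meson Diff_mono finite_subset order_refl)
  moreover obtain j where "j < length Qs" "B' ! 0 \<subseteq> Qs ! j"
    using vec_le_first \<open>vec_le B' Qs\<close> by blast
  then have "B' ! 0 \<inter> Q0 = {}"
    using part pairwise_disj_vec_Cons[of Q0 Qs "Qs ! j"] unfolding F_partition_def by auto
  ultimately have "finite (B' ! 0)"
    by (simp add: Diff_triv)
  then show False
    using B' unfolding class_problem_def by (auto simp: Suc_le_eq)
qed (use assms(3) in auto)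

lemma pseudo_intersections_exist:
  assumes "F \<subseteq> Pow S" "countable F" "nontrivial_fam S F"
    and "\<forall>Q1\<in>F. \<forall>Q2\<in>F. Q1 \<union> Q2 \<in> F \<and> Q1 \<inter> Q2 \<in> F"
    and "cond_class_problem S C A" "\<forall>i<length A. [A ! i] \<notin> cclass S 1 C F"
  shows "\<exists>Bf. \<forall>i<length A. Bf i \<subseteq> A ! i \<and> infinite (Bf i) \<and>
           (\<forall>Q\<in>complemented_supersets S F C. finite (Bf i - Q))"
proof -
  let ?K = "complemented_supersets S F C"
  have "S \<in> ?K"
    using assms(3,5) by (auto simp: complemented_supersets_def nontrivial_fam_def cond_class_problem_def)
  have "countable ?K"
    using assms(2) by (auto simp: complemented_supersets_def)
  have "\<forall>i<length A. \<exists>Bi \<subseteq> A ! i. infinite Bi \<and> (\<forall>Q\<in>?K. finite (Bi - Q))"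
  proof (intro allI impI pseudo_intersection_countable)
    fix i assume "i < length A"
    then have "cond_class_problem S C [A ! i]"
      using assms(5) by (auto simp: cond_class_problem_def class_problem_def pairwise_disj_vec_def)
    then show "\<forall>Q\<in>?K. infinite (A ! i \<inter> Q)"
      using infinite_Int_if_not_cclass1[OF assms(1,3)] assms(6) \<open>i < length A\<close> by blast
    show "\<forall>P\<in>?K. \<forall>Q\<in>?K. P \<inter> Q \<in> ?K"
      using complemented_supersets_Int[OF assms(4)] by blast
    show "?K \<noteq> {}"
      using \<open>S \<in> ?K\<close> by blast
  qed (rule \<open>countable ?K\<close>)
  then have "\<forall>i. \<exists>Bi. i < length A \<longrightarrow> Bi \<subseteq> A ! i \<and> infinite Bi \<and> (\<forall>Q\<in>?K. finite (Bi - Q))"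
    by blast
  then show ?thesis
    by (rule choice)
qed

lemma ccore_of_pseudo_intersections:
  assumes "nontrivial_fam S F" "\<forall>Q1\<in>F. \<forall>Q2\<in>F. Q1 \<union> Q2 \<in> F"
    and "cond_class_problem S C A"
    and Bf: "\<forall>i<length A. Bf i \<subseteq> A ! i \<and> infinite (Bf i) \<and>
               (\<forall>Q\<in>complemented_supersets S F C. finite (Bf i - Q))"
  defines "B \<equiv> map Bf [0..<length A]"
  shows "vec_le B A \<and> B \<in> ccore S (length A) C F"
proof
  have "cond_class_problem S C B"
    using cond_class_problem_shrink[OF assms(3)] Bf by (auto simp: B_def)
  moreover have "\<forall>i<length B. \<forall>Q\<in>complemented_supersets S F C. finite (B ! i - Q)"
    using Bf by (simp add: B_def)
  ultimately have "B \<in> ccore S (length B) C F"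
    by (rule ccore_if_pseudo_intersections[OF assms(1,2)])
  then show "B \<in> ccore S (length A) C F"
    by (simp add: B_def)
  show "vec_le B A"
    using assms(3) Bf unfolding cond_class_problem_def class_problem_def
    by (intro vec_le_componentwise) (auto simp: B_def)
qed

theorem lemma4p6:
  fixes S C :: "'a set" and F :: "'a set set" and A :: "'a set list" and k :: nat
  assumes "infinite S"
    and "F \<subseteq> Pow S" and "countable F" and "nontrivial_fam S F"
    and "\<forall>Q1\<in>F. \<forall>Q2\<in>F. Q1 \<union> Q2 \<in> F \<and> Q1 \<inter> Q2 \<in> F"
    and "cond_class_problem S C A" and "length A = k"
    and "infinite C" and "infinite (S - C)"
    and "\<forall>i<k. [A!i] \<notin> cclass S 1 C F"
  shows "\<exists>B. vec_le B A \<and> length B = k \<and> B \<in> ccore S k C F"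
proof -
  obtain Bf where "\<forall>i<k. Bf i \<subseteq> A ! i \<and> infinite (Bf i) \<and>
      (\<forall>Q\<in>complemented_supersets S F C. finite (Bf i - Q))"
    using pseudo_intersections_exist[OF assms(2-6)] assms(7,10) by blast
  then have "vec_le (map Bf [0..<k]) A \<and> map Bf [0..<k] \<in> ccore S k C F"
    using ccore_of_pseudo_intersections[OF assms(4) _ assms(6)] assms(5,7) by blast
  then show ?thesis
    by force
qed

end
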